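(* Let $(\beta_k)_{k\in\mathbb{N}}$ be a sequence of real numbers. The multi-indexed sequence $$\bar F_{n_1,\ldots,n_d}=\prod_{k=1}^d\beta_k^{n_{(d-k+1)}-n_{(d-k)}},\qquad n_1,\ldots,n_d\in\mathbb{N}_0,$$ is a $d$-dimensional discrete survival function for every $d\ge2$ if and only if $(1,\beta_1,\beta_2,\ldots)\in\mathcal{M}_\infty$. In that case it defines, for each $d$, an infinitely extendible exchangeable wide-sense geometric law.
   Context: $\mathbb{N}_0=\{0,1,\ldots\}$; $n_{(0)}:=0\le n_{(1)}\le\cdots\le n_{(d)}$ is the ordered list of $n_1,\ldots,n_d$; $0^0:=1$. A discrete survival function is $\mathbb{P}(\tau_1>n_1,\ldots,\tau_d>n_d)$ for some $\mathbb{N}^d$-valued random vector. $\nabla^jx_k:=\sum_{i=0}^j(-1)^i\binom{j}{i}x_{k+i}$; $\mathcal{M}_\infty:=\{(x_k)_{k\in\mathbb{N}_0}: x_0=1,\ x_1<1,\ \nabla^jx_k\ge0\ \forall j,k\in\mathbb{N}_0\}$. Wide-sense geometric law: for $\tilde p_I\in[0,1]$, $I\subseteq\{1,\ldots,d\}$, $\sum_I\tilde p_I=1$, $\sum_{I\not\ni k}\tilde p_I<1$, run i.i.d. trials with outcome $I$ of probability $\tilde p_I$, $\tilde E_I$ the first trial with outcome $I$, $\tau_k=\min\{\tilde E_I:k\in I\}$. Infinitely extendible: there exists an infinite exchangeable sequence $(\tau_k)_{k\in\mathbb{N}}$ such that $(\tau_1,\ldots,\tau_m)$ is exchangeable wide-sense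 geometric for every $m$ and $(\tau_1,\ldots,\tau_d)$ has the given law. *)

theory Defs
  imports "HOL-Probability.Probability"
begin

definition ordstat :: "nat list \<Rightarrow> nat \<Rightarrow> nat" where
  "ordstat n k = (0 # sort n) ! k"

definition Fbar :: "(nat \<Rightarrow> real) \<Rightarrow> nat \<Rightarrow> nat list \<Rightarrow> real" where
  "Fbar \<beta> d n = (\<Prod>k=1..d. \<beta> k ^ (ordstat n (d - k + 1) - ordstat n (d - k)))"

definition nabla :: "(nat \<Rightarrow> real) \<Rightarrow> nat \<Rightarrow> nat \<Rightarrow> real" where
  "nabla x j k = (\<Sum>i=0..j. (-1) ^ i * of_nat (j choose i) * x (k + i))"

definition M_infty :: "(nat \<Rightarrow> real) set" where
  "M_infty = {x. x 0 = 1 \<and> x 1 < 1 \<and> (\<forall>j k. nabla x j k \<ge> 0)}"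

text \<open>Laws of N^d-valued random vectors (N = positive integers), as pmfs on lists of length d.\<close>
definition is_law_on :: "nat \<Rightarrow> nat list pmf \<Rightarrow> bool" where
  "is_law_on d p \<longleftrightarrow> set_pmf p \<subseteq> {t. length t = d \<and> (\<forall>i<d. 0 < t ! i)}"

definition survival_pmf :: "nat list pmf \<Rightarrow> nat list \<Rightarrow> real" where
  "survival_pmf p n = measure_pmf.prob p {t. \<forall>i<length n. n ! i < t ! i}"

definition has_survival :: "nat \<Rightarrow> nat list pmf \<Rightarrow> (nat list \<Rightarrow> real) \<Rightarrow> bool" where
  "has_survival d p F \<longleftrightarrow> is_law_on d p \<and> (\<forall>n. length n = d \<longrightarrow> survival_pmf p n = F n)"

definition is_discrete_survival :: "nat \<Rightarrow> (nat list \<Rightarrow> real) \<Rightarrow> bool" where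
  "is_discrete_survival d F \<longleftrightarrow> (\<exists>p. has_survival d p F)"

text \<open>Trials are indexed 1,2,...; the outcome of trial i+1 is
  the (i)-th element of a stream of i.i.d. outcomes (subsets of the 0-based index set
  {0..<d}); tau_k = number of the first trial whose outcome contains k.\<close>
definition wsg_times :: "nat \<Rightarrow> nat set stream \<Rightarrow> nat list" where
  "wsg_times d \<omega> = map (\<lambda>k. Suc (LEAST i. k \<in> \<omega> !! i)) [0..<d]"

definition is_wsg_law :: "nat \<Rightarrow> nat list pmf \<Rightarrow> bool" where
  "is_wsg_law d p \<longleftrightarrow> (\<exists>q :: nat set pmf.
      set_pmf q \<subseteq> Pow {0..<d} \<and>
      (\<forall>k<d. measure_pmf.prob q {I. k \<notin> I} < 1) \<and>
      measure_pmf p = distr (stream_space (measure_pmf q)) (count_space UNIV) (wsg_times d))"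

definition exchangeable_law :: "nat \<Rightarrow> nat list pmf \<Rightarrow> bool" where
  "exchangeable_law d p \<longleftrightarrow>
     (\<forall>\<pi>. \<pi> permutes {0..<d} \<longrightarrow> map_pmf (\<lambda>t. map (\<lambda>i. t ! \<pi> i) [0..<d]) p = p)"

text \<open>Infinite extendibility: a law P of an infinite sequence (tau_1, tau_2, ...) whose
  m-dimensional marginals are exchangeable wide-sense geometric for every m \<ge> 1
  (hence the sequence is exchangeable), and whose d-marginal is p.\<close>
definition infinitely_extendible :: "nat \<Rightarrow> nat list pmf \<Rightarrow> bool" where
  "infinitely_extendible d p \<longleftrightarrow>
     (\<exists>P :: nat stream measure. prob_space P \<and>
        sets P = sets (stream_space (count_space UNIV)) \<and>
        (\<forall>m\<ge>1. \<exists>pm. measure_pmf pm = distr P (count_space UNIV) (stake m) \<and>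
                  exchangeable_law m pm \<and> is_wsg_law m pm \<and> (m = d \<longrightarrow> pm = p)))"

end

theory Submission
  imports Defs
begin

(* For x in M_infty and a finite index set K, the numbers nabla^|A| x_(|K|-|A|), A \<subseteq> K,
   are nonnegative and sum to x_0 = 1: they are the outcome probabilities of a single trial.
   These laws are consistent under restriction to J \<subseteq> K and invariant under permutations
   of K, and they miss a fixed S \<subseteq> K with probability x_|S|. With i.i.d. trials,
   tau_i > n_i iff the first n_i trials all miss i, so the survival function is
   prod_(j<N) x_#{i. n_i > j}, which is exactly Fbar for x = (1, beta_1, beta_2, ...).
   Consistency gives, by Kolmogorov's extension theorem, i.i.d. random subsets of the whole
   of nat, whose hitting times form the infinite exchangeable extension.
   Conversely, at 0/1 arguments Fbar says that the events {tau_i > 1} have joint probabilities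
   x_|T|; by inclusion-exclusion nabla^j x_k is the probability that exactly the first k of
   k + j such events occur, and x_1 < 1 since otherwise tau_1 would exceed every bound. *)

lemma sum_Pow_insert:
  assumes "finite K" "e \<notin> K"
  shows "(\<Sum>A\<in>Pow (insert e K). f A) = (\<Sum>A\<in>Pow K. f A) + (\<Sum>A\<in>Pow K. f (insert e A))"
proof -
  have "inj_on (insert e) (Pow K)"
    using assms(2) by (intro inj_onI) (metis PowD insert_ident subsetD)
  then show ?thesis
    unfolding Pow_insert using assms by (subst sum.union_disjoint) (auto simp: sum.reindex)
qed

lemma nabla_0 [simp]: "nabla x 0 k = x k"
  by (simp add: nabla_def)

lemma nabla_Suc: "nabla x (Suc j) k = nabla x j k - nabla x j (Suc k)"
proof -
  \<comment> \<open>Pascal's rule for the binomial coefficients\<close>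
  have "nabla x (Suc j) k = (\<Sum>i=0..Suc j. (-1) ^ i * of_nat (j choose i) * x (k + i))
        + (\<Sum>i=0..Suc j. (-1) ^ i * of_nat (if i = 0 then 0 else j choose (i - 1)) * x (k + i))"
    unfolding nabla_def sum.distrib[symmetric]
    by (intro sum.cong refl, rename_tac i, case_tac i) (simp_all add: algebra_simps)
  also have "(\<Sum>i=0..Suc j. (-1) ^ i * of_nat (j choose i) * x (k + i)) = nabla x j k"
    by (simp add: nabla_def)
  also have "(\<Sum>i=0..Suc j. (-1) ^ i * of_nat (if i = 0 then 0 else j choose (i - 1)) * x (k + i))
       = - nabla x j (Suc k)"
    by (subst sum.atLeast0_atMost_Suc_shift) (simp add: nabla_def sum_negf[symmetric])
  finally show ?thesis by simp
qed

lemma sum_Pow_nabla: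
  assumes "finite K"
  shows "(\<Sum>A\<in>Pow K. nabla x (card A) (k + card K - card A)) = x k"
  using assms
proof (induction K rule: finite_induct)
  case empty
  then show ?case by simp
next
  case (insert e K)
  have "nabla x (card A) (k + card (insert e K) - card A)
      + nabla x (card (insert e A)) (k + card (insert e K) - card (insert e A))
      = nabla x (card A) (k + card K - card A)" if "A \<in> Pow K" for A
  proof -
    from that insert.hyps have "finite A" "e \<notin> A" "card A \<le> card K"
      by (auto intro: finite_subset card_mono)
    then show ?thesis using insert.hyps by (simp add: nabla_Suc Suc_diff_le)
  qed
  then show ?case
    using insert by (simp add: sum_Pow_insert sum.distrib[symmetric])
qed

lemma sum_Pow_card:
  assumes "finite J"
  shows "(\<Sum>S\<in>Pow J. g (card S)) = (\<Sum>i=0..card J. of_nat (card J choose i) * (g i :: real))"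
proof -
  have "(\<Sum>S\<in>Pow J. g (card S)) = (\<Sum>i=0..card J. \<Sum>S\<in>{S\<in>Pow J. card S = i}. g (card S))"
    by (rule sum.group[symmetric]) (use assms in \<open>auto simp: card_mono\<close>)
  also have "\<dots> = (\<Sum>i=0..card J. of_nat (card J choose i) * g i)"
    using n_subsets[OF assms] by (intro sum.cong) (auto simp: Collect_conj_eq Int_def[symmetric] Pow_def)
  finally show ?thesis .
qed

section \<open>The outcome law of a single trial\<close>

definition completely_monotone :: "(nat \<Rightarrow> real) \<Rightarrow> bool" where
  "completely_monotone x \<longleftrightarrow> x 0 = 1 \<and> (\<forall>j k. 0 \<le> nabla x j k)"

lemma M_infty_iff: "x \<in> M_infty \<longleftrightarrow> completely_monotone x \<and> x 1 < 1"
  by (auto simp: M_infty_def completely_monotone_def)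

definition outcome_weight :: "(nat \<Rightarrow> real) \<Rightarrow> 'a set \<Rightarrow> 'a set \<Rightarrow> real" where
  "outcome_weight x K A = (if A \<subseteq> K then nabla x (card A) (card K - card A) else 0)"

definition outcome_pmf :: "(nat \<Rightarrow> real) \<Rightarrow> 'a set \<Rightarrow> 'a set pmf" where
  "outcome_pmf x K = embed_pmf (outcome_weight x K)"

context
  fixes x :: "nat \<Rightarrow> real"
  assumes cm: "completely_monotone x"
begin

lemma outcome_weight_nonneg: "0 \<le> outcome_weight x K A"
  using cm by (simp add: outcome_weight_def completely_monotone_def)

lemma pmf_outcome_pmf:
  assumes "finite K"
  shows "pmf (outcome_pmf x K) A = outcome_weight x K A"
  unfolding outcome_pmf_def
proof (rule pmf_embed_pmf)
  have "(\<integral>\<^sup>+ A. ennreal (outcome_weight x K A) \<partial>count_space UNIV) = (\<Sum>A\<in>Pow K. ennreal (outcome_weight x K A))"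
    by (rule nn_integral_count_space') (use assms in \<open>auto simp: outcome_weight_def\<close>)
  also have "\<dots> = ennreal (\<Sum>A\<in>Pow K. nabla x (card A) (0 + card K - card A))"
    by (subst sum_ennreal) (use cm in \<open>auto simp: outcome_weight_def completely_monotone_def\<close>)
  also have "\<dots> = 1"
    using sum_Pow_nabla[OF assms, of x 0] cm by (simp add: completely_monotone_def)
  finally show "(\<integral>\<^sup>+ A. ennreal (outcome_weight x K A) \<partial>count_space UNIV) = 1" .
qed (rule outcome_weight_nonneg)

lemma set_pmf_outcome_pmf: "finite K \<Longrightarrow> set_pmf (outcome_pmf x K) \<subseteq> Pow K"
  by (auto simp: set_pmf_iff pmf_outcome_pmf outcome_weight_def split: if_splits)

lemma prob_outcome_pmf:
  assumes "finite K"
  shows "measure_pmf.prob (outcome_pmf x K) X = (\<Sum>A\<in>X \<inter> Pow K. outcome_weight x K A)"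
proof -
  have "measure_pmf.prob (outcome_pmf x K) X = measure_pmf.prob (outcome_pmf x K) (X \<inter> Pow K)"
    using set_pmf_outcome_pmf[OF assms] by (metis inf.absorb_iff2 inf_assoc measure_Int_set_pmf)
  also have "\<dots> = (\<Sum>A\<in>X \<inter> Pow K. outcome_weight x K A)"
    using assms by (subst measure_measure_pmf_finite) (auto simp: pmf_outcome_pmf)
  finally show ?thesis .
qed

lemma outcome_pmf_restrict_insert:
  assumes "finite L" "e \<notin> L"
  shows "map_pmf (\<lambda>A. A \<inter> L) (outcome_pmf x (insert e L)) = outcome_pmf x L"
proof (rule pmf_eqI)
  fix A
  have "pmf (map_pmf (\<lambda>A. A \<inter> L) (outcome_pmf x (insert e L))) A
      = (\<Sum>B\<in>(\<lambda>A. A \<inter> L) -` {A} \<inter> Pow (insert e L). outcome_weight x (insert e L) B)"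
    using assms by (simp add: pmf_map prob_outcome_pmf)
  also have "\<dots> = outcome_weight x L A"
  proof (cases "A \<subseteq> L")
    case True
    then have "(\<lambda>A. A \<inter> L) -` {A} \<inter> Pow (insert e L) = {A, insert e A}"
      "A \<noteq> insert e A" "e \<notin> A" "finite A" "card A \<le> card L"
      using assms by (auto intro: finite_subset card_mono)
    then show ?thesis
      using True assms by (simp add: outcome_weight_def nabla_Suc Suc_diff_le subset_insertI2)
  next
    case False
    then have "(\<lambda>A. A \<inter> L) -` {A} \<inter> Pow (insert e L) = {}" by auto
    then show ?thesis using False by (simp add: outcome_weight_def)
  qed
  also have "\<dots> = pmf (outcome_pmf x L) A" using assms by (simp add: pmf_outcome_pmf)
  finally show "pmf (map_pmf (\<lambda>A. A \<inter> L) (outcome_pmf x (insert e L))) A = pmf (outcome_pmf x L) A" .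
qed

lemma outcome_pmf_restrict:
  assumes "finite K" "J \<subseteq> K"
  shows "map_pmf (\<lambda>A. A \<inter> J) (outcome_pmf x K) = outcome_pmf x J"
proof -
  have "finite J" using assms finite_subset by blast
  have "map_pmf (\<lambda>A. A \<inter> J) (outcome_pmf x (J \<union> E)) = outcome_pmf x J" if "finite E" for E
    using that
  proof (induction E rule: finite_induct)
    case empty
    show ?case using set_pmf_outcome_pmf[OF \<open>finite J\<close>] by (auto intro!: map_pmf_idI)
  next
    case (insert e E)
    show ?case
    proof (cases "e \<in> J")
      case True
      then show ?thesis using insert by (simp add: insert_absorb)
    next
      case False
      have "(\<lambda>A. A \<inter> J) = (\<lambda>A. A \<inter> J) \<circ> (\<lambda>A. A \<inter> (J \<union> E))" by auto
      then have "map_pmf (\<lambda>A. A \<inter> J) (outcome_pmf x (insert e (J \<union> E)))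
          = map_pmf (\<lambda>A. A \<inter> J) (map_pmf (\<lambda>A. A \<inter> (J \<union> E)) (outcome_pmf x (insert e (J \<union> E))))"
        by (simp add: pmf.map_comp)
      also have "\<dots> = outcome_pmf x J"
        using False insert \<open>finite J\<close> by (simp add: outcome_pmf_restrict_insert)
      finally show ?thesis by simp
    qed
  qed
  moreover have "K = J \<union> (K - J)" using assms by auto
  ultimately show ?thesis using assms by (metis finite_Diff)
qed

lemma prob_outcome_pmf_disjoint:
  assumes "finite K" "S \<subseteq> K"
  shows "measure_pmf.prob (outcome_pmf x K) {A. A \<inter> S = {}} = x (card S)"
proof -
  have "measure_pmf.prob (outcome_pmf x K) {A. A \<inter> S = {}}
      = measure_pmf.prob (map_pmf (\<lambda>A. A \<inter> S) (outcome_pmf x K)) {{}}"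
    by (simp add: vimage_def)
  also have "\<dots> = x (card S)"
    using assms finite_subset[OF assms(2,1)]
    by (simp add: outcome_pmf_restrict measure_pmf_single pmf_outcome_pmf outcome_weight_def)
  finally show ?thesis .
qed

lemma prob_outcome_pmf_not_mem:
  assumes "finite K" "k \<in> K"
  shows "measure_pmf.prob (outcome_pmf x K) {I. k \<notin> I} = x 1"
proof -
  have "{I. k \<notin> I} = {I. I \<inter> {k} = {}}" by auto
  then show ?thesis using prob_outcome_pmf_disjoint[OF assms(1), of "{k}"] assms(2) by simp
qed

lemma outcome_pmf_permute:
  assumes "finite K" "\<pi> permutes K"
  shows "map_pmf (\<lambda>A. {k\<in>K. \<pi> k \<in> A}) (outcome_pmf x K) = outcome_pmf x K"
proof (rule pmf_eqI)
  fix A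
  let ?h = "\<lambda>A. {k\<in>K. \<pi> k \<in> A}"
  have "pmf (map_pmf ?h (outcome_pmf x K)) A = (\<Sum>B\<in>?h -` {A} \<inter> Pow K. outcome_weight x K B)"
    using assms by (simp add: pmf_map prob_outcome_pmf)
  also have "\<dots> = outcome_weight x K A"
  proof (cases "A \<subseteq> K")
    case True
    have "?h -` {A} \<inter> Pow K = {\<pi> ` A}"
    proof (intro equalityI subsetI)
      fix B assume "B \<in> ?h -` {A} \<inter> Pow K"
      then have "B \<subseteq> K" "A = {k\<in>K. \<pi> k \<in> B}" by auto
      moreover have "\<pi> ` {k\<in>K. \<pi> k \<in> B} = \<pi> ` K \<inter> B" by auto
      ultimately have "\<pi> ` A = B" using permutes_image[OF assms(2)] by auto
      then show "B \<in> {\<pi> ` A}" by simp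
    qed (use True assms(2) in \<open>auto simp: permutes_in_image permutes_inj inj_image_mem_iff\<close>)
    moreover have "\<pi> ` A \<subseteq> K" "card (\<pi> ` A) = card A"
      using True assms(2) by (auto simp: permutes_in_image intro!: card_image inj_on_subset[OF permutes_inj])
    ultimately show ?thesis using True by (simp add: outcome_weight_def)
  next
    case False
    then have "?h -` {A} \<inter> Pow K = {}" by auto
    then show ?thesis using False by (simp add: outcome_weight_def)
  qed
  also have "\<dots> = pmf (outcome_pmf x K) A" by (simp add: pmf_outcome_pmf assms)
  finally show "pmf (map_pmf ?h (outcome_pmf x K)) A = pmf (outcome_pmf x K) A" .
qed

end

section \<open>Fbar as a product over trials\<close>

definition lead_one :: "(nat \<Rightarrow> real) \<Rightarrow> nat \<Rightarrow> real" where
  "lead_one \<beta> k = (if k = 0 then 1 else \<beta> k)"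

definition count_above :: "nat list \<Rightarrow> nat \<Rightarrow> nat" where
  "count_above s j = length (filter (\<lambda>v. j < v) s)"

lemma prod_count_above_sorted:
  assumes "sorted s" "\<forall>v\<in>set s. a \<le> v \<and> v \<le> N" "a \<le> N"
  shows "(\<Prod>j\<in>{a..<N}. lead_one \<beta> (count_above s j)) =
    (\<Prod>k=1..length s. \<beta> k ^ ((a # s) ! (length s - k + 1) - (a # s) ! (length s - k)))"
  using assms
proof (induction s arbitrary: a)
  case Nil
  then show ?case by (simp add: count_above_def lead_one_def)
next
  case (Cons b s)
  have ab: "a \<le> b" "b \<le> N" and sb: "\<forall>v\<in>set s. b \<le> v \<and> v \<le> N"
    using Cons.prems by auto
  have sorted_s: "sorted s" using Cons.prems(1) by simp
  have below_b: "count_above (b # s) j = Suc (length s)" if "j < b" for j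
    unfolding count_above_def using sb that by (subst filter_True) auto
  have from_b: "count_above (b # s) j = count_above s j" if "b \<le> j" for j
    using that by (simp add: count_above_def)
  have "(\<Prod>j\<in>{a..<N}. lead_one \<beta> (count_above (b # s) j))
      = (\<Prod>j\<in>{a..<b}. lead_one \<beta> (count_above (b # s) j)) * (\<Prod>j\<in>{b..<N}. lead_one \<beta> (count_above (b # s) j))"
    using ab by (simp add: prod.atLeastLessThan_concat)
  also have "\<dots> = \<beta> (Suc (length s)) ^ (b - a) * (\<Prod>j\<in>{b..<N}. lead_one \<beta> (count_above s j))"
    using below_b from_b by (simp add: lead_one_def)
  also have "(\<Prod>j\<in>{b..<N}. lead_one \<beta> (count_above s j)) =
      (\<Prod>k=1..length s. \<beta> k ^ ((a # b # s) ! (length (b # s) - k + 1) - (a # b # s) ! (length (b # s) - k)))"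
    unfolding Cons.IH[OF sorted_s sb ab(2)]
    by (intro prod.cong refl) (auto simp: Suc_diff_le)
  also have "\<beta> (Suc (length s)) ^ (b - a) * \<dots> = (\<Prod>k=1..length (b # s).
      \<beta> k ^ ((a # b # s) ! (length (b # s) - k + 1) - (a # b # s) ! (length (b # s) - k)))"
    by (simp add: prod.cl_ivl_Suc mult.commute)
  finally show ?case .
qed

lemma Fbar_eq_prod_count_above:
  assumes "length n = d" "\<forall>v\<in>set n. v \<le> N"
  shows "Fbar \<beta> d n = (\<Prod>j<N. lead_one \<beta> (count_above n j))"
proof -
  have "count_above (sort n) j = count_above n j" for j
    by (simp add: count_above_def filter_sort)
  then show ?thesis
    using prod_count_above_sorted[of "sort n" 0 N \<beta>] assms
    by (simp add: Fbar_def ordstat_def atLeast0LessThan)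
qed

definition indicator_list :: "nat \<Rightarrow> nat set \<Rightarrow> nat list" where
  "indicator_list d T = map (\<lambda>i. if i \<in> T then 1 else 0) [0..<d]"

lemma Fbar_indicator_list:
  assumes "T \<subseteq> {0..<d}"
  shows "Fbar \<beta> d (indicator_list d T) = lead_one \<beta> (card T)"
proof -
  have "{i. i < d \<and> 0 < indicator_list d T ! i} = T"
    using assms by (auto simp: indicator_list_def split: if_splits)
  then have "count_above (indicator_list d T) 0 = card T"
    by (simp add: count_above_def length_filter_conv_card) (simp add: indicator_list_def)
  moreover have "\<forall>v\<in>set (indicator_list d T). v \<le> 1"
    by (auto simp: indicator_list_def)
  ultimately show ?thesis
    using Fbar_eq_prod_count_above[of "indicator_list d T" d 1] by (simp add: indicator_list_def)
qed

section \<open>Necessity\<close>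

lemma prob_inclusion_exclusion:
  fixes p :: "'a pmf" and A :: "nat \<Rightarrow> 'a set"
  assumes "finite J"
  shows "measure_pmf.prob p {t. (\<forall>i\<in>K. t \<in> A i) \<and> (\<forall>i\<in>J. t \<notin> A i)}
       = (\<Sum>S\<in>Pow J. (-1) ^ card S * measure_pmf.prob p {t. \<forall>i\<in>K \<union> S. t \<in> A i})"
  using assms
proof (induction J arbitrary: K rule: finite_induct)
  case empty
  then show ?case by simp
next
  case (insert j J)
  have split: "{t. (\<forall>i\<in>K. t \<in> A i) \<and> (\<forall>i\<in>insert j J. t \<notin> A i)}
     = {t. (\<forall>i\<in>K. t \<in> A i) \<and> (\<forall>i\<in>J. t \<notin> A i)} - {t. (\<forall>i\<in>insert j K. t \<in> A i) \<and> (\<forall>i\<in>J. t \<notin> A i)}"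
    by auto
  have neg: "(\<Sum>S\<in>Pow J. (-1) ^ card S * measure_pmf.prob p {t. \<forall>i\<in>insert j K \<union> S. t \<in> A i})
     = - (\<Sum>S\<in>Pow J. (-1) ^ card (insert j S) * measure_pmf.prob p {t. \<forall>i\<in>K \<union> insert j S. t \<in> A i})"
    unfolding sum_negf[symmetric]
  proof (rule sum.cong[OF refl])
    fix S assume "S \<in> Pow J"
    with insert.hyps have "finite S" "j \<notin> S" by (auto intro: finite_subset)
    then show "(-1) ^ card S * measure_pmf.prob p {t. \<forall>i\<in>insert j K \<union> S. t \<in> A i}
      = - ((-1) ^ card (insert j S) * measure_pmf.prob p {t. \<forall>i\<in>K \<union> insert j S. t \<in> A i})"
      by simp
  qed
  have "measure_pmf.prob p {t. (\<forall>i\<in>K. t \<in> A i) \<and> (\<forall>i\<in>insert j J. t \<notin> A i)}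
     = measure_pmf.prob p {t. (\<forall>i\<in>K. t \<in> A i) \<and> (\<forall>i\<in>J. t \<notin> A i)}
       - measure_pmf.prob p {t. (\<forall>i\<in>insert j K. t \<in> A i) \<and> (\<forall>i\<in>J. t \<notin> A i)}"
    unfolding split by (rule measure_pmf.finite_measure_Diff) auto
  also have "\<dots> = (\<Sum>S\<in>Pow J. (-1) ^ card S * measure_pmf.prob p {t. \<forall>i\<in>K \<union> S. t \<in> A i})
     + (\<Sum>S\<in>Pow J. (-1) ^ card (insert j S) * measure_pmf.prob p {t. \<forall>i\<in>K \<union> insert j S. t \<in> A i})"
    by (simp only: insert.IH neg diff_minus_eq_add)
  also have "\<dots> = (\<Sum>S\<in>Pow (insert j J). (-1) ^ card S * measure_pmf.prob p {t. \<forall>i\<in>K \<union> S. t \<in> A i})"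
    by (simp only: sum_Pow_insert[OF insert.hyps])
  finally show ?case .
qed

lemma prob_exceed_one_of_survival:
  assumes p: "has_survival d p (Fbar \<beta> d)" and T: "T \<subseteq> {0..<d}"
  shows "measure_pmf.prob p {t. \<forall>i\<in>T. 1 < t ! i} = lead_one \<beta> (card T)"
proof -
  have "measure_pmf.prob p {t. \<forall>i\<in>T. 1 < t ! i} = survival_pmf p (indicator_list d T)"
    unfolding survival_pmf_def
  proof (rule measure_eq_AE)
    show "AE t in measure_pmf p. (t \<in> {t. \<forall>i\<in>T. 1 < t ! i}) =
        (t \<in> {t. \<forall>i<length (indicator_list d T). indicator_list d T ! i < t ! i})"
      using p T by (intro AE_pmfI) (auto simp: has_survival_def is_law_on_def indicator_list_def)
  qed simp_all
  also have "\<dots> = lead_one \<beta> (card T)"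
    using p Fbar_indicator_list[OF T] by (simp add: has_survival_def indicator_list_def)
  finally show ?thesis .
qed

lemma nabla_nonneg_of_survival:
  assumes p: "has_survival d p (Fbar \<beta> d)" and jk: "k + j \<le> d"
  shows "0 \<le> nabla (lead_one \<beta>) j k"
proof -
  define K where "K = {0..<k}"
  define J where "J = {k..<k+j}"
  define A where "A i = {t::nat list. 1 < t ! i}" for i
  have "0 \<le> measure_pmf.prob p {t. (\<forall>i\<in>K. t \<in> A i) \<and> (\<forall>i\<in>J. t \<notin> A i)}" by simp
  also have "\<dots> = (\<Sum>S\<in>Pow J. (-1) ^ card S * measure_pmf.prob p {t. \<forall>i\<in>K \<union> S. t \<in> A i})"
    by (rule prob_inclusion_exclusion) (simp add: J_def)
  also have "\<dots> = (\<Sum>S\<in>Pow J. (-1) ^ card S * lead_one \<beta> (k + card S))"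
  proof (intro sum.cong refl)
    fix S assume S: "S \<in> Pow J"
    then have "K \<union> S \<subseteq> {0..<d}" "card (K \<union> S) = k + card S"
      using jk by (auto simp: K_def J_def, subst card_Un_disjoint) (auto intro: finite_subset)
    then show "(-1) ^ card S * measure_pmf.prob p {t. \<forall>i\<in>K \<union> S. t \<in> A i}
        = (-1) ^ card S * lead_one \<beta> (k + card S)"
      using prob_exceed_one_of_survival[OF p] by (simp add: A_def)
  qed
  also have "\<dots> = (\<Sum>i=0..j. of_nat (j choose i) * ((-1) ^ i * lead_one \<beta> (k + i)))"
    using sum_Pow_card[of J "\<lambda>c. (-1) ^ c * lead_one \<beta> (k + c)"] by (simp add: J_def)
  also have "\<dots> = nabla (lead_one \<beta>) j k"
    unfolding nabla_def by (simp add: mult_ac)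
  finally show ?thesis .
qed

lemma beta_one_less_one_of_survival:
  assumes p: "has_survival d p (Fbar \<beta> d)" and "0 < d"
  shows "\<beta> 1 < 1"
proof (rule ccontr)
  assume "\<not> \<beta> 1 < 1"
  define n :: "nat \<Rightarrow> nat list" where "n m = m # replicate (d - 1) 0" for m
  have "AE t in measure_pmf p. m < t ! 0" for m
  proof -
    have "Fbar \<beta> d (n m) = (\<Prod>j<m. lead_one \<beta> (count_above (n m) j))"
      by (rule Fbar_eq_prod_count_above) (use \<open>0 < d\<close> in \<open>auto simp: n_def\<close>)
    also have "\<dots> = \<beta> 1 ^ m"
      by (simp add: n_def count_above_def lead_one_def)
    finally have "survival_pmf p (n m) = \<beta> 1 ^ m"
      using p \<open>0 < d\<close> by (simp add: has_survival_def n_def)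
    moreover have "survival_pmf p (n m) \<le> measure_pmf.prob p {t. m < t ! 0}"
      unfolding survival_pmf_def using \<open>0 < d\<close>
      by (intro measure_pmf.finite_measure_mono) (auto simp: n_def)
    moreover have "1 \<le> \<beta> 1 ^ m"
      using \<open>\<not> \<beta> 1 < 1\<close> by (simp add: one_le_power)
    ultimately have "measure_pmf.prob p {t. m < t ! 0} = 1"
      using measure_pmf.prob_le_1 by (metis antisym order_trans)
    then show ?thesis by (auto dest: measure_pmf.AE_prob_1)
  qed
  then have "AE t in measure_pmf p. \<forall>m. m < t ! 0"
    by (simp add: AE_all_countable)
  then have "AE t in measure_pmf p. False" by (rule AE_mp) auto
  then show False by simp
qed

lemma lead_one_in_M_infty:
  assumes "\<forall>d\<ge>2. is_discrete_survival d (Fbar \<beta> d)"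
  shows "lead_one \<beta> \<in> M_infty"
proof -
  have "0 \<le> nabla (lead_one \<beta>) j k" for j k
  proof -
    obtain p where "has_survival (max 2 (k + j)) p (Fbar \<beta> (max 2 (k + j)))"
      using assms[rule_format, of "max 2 (k + j)"] by (auto simp: is_discrete_survival_def)
    then show ?thesis by (rule nabla_nonneg_of_survival) simp
  qed
  moreover have "\<beta> 1 < 1"
  proof -
    obtain p where "has_survival 2 p (Fbar \<beta> 2)"
      using assms by (auto simp: is_discrete_survival_def)
    then show ?thesis by (rule beta_one_less_one_of_survival) simp
  qed
  ultimately show ?thesis by (simp add: M_infty_def lead_one_def)
qed

section \<open>Wide-sense geometric laws from i.i.d. trials\<close>

lemma sets_stream_prefix:
  "{\<omega>\<in>space (stream_space (measure_pmf q)). \<forall>j<N. \<omega> !! j \<in> A j} \<in> sets (stream_space (measure_pmf q))"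
proof (rule sets.sets_Collect_countable_All)
  fix j
  have "(\<lambda>\<omega>. \<omega> !! j) -` A j \<inter> space (stream_space (measure_pmf q)) \<in> sets (stream_space (measure_pmf q))"
    by (rule measurable_sets[OF measurable_snth]) simp
  then show "{\<omega>\<in>space (stream_space (measure_pmf q)). j < N \<longrightarrow> \<omega> !! j \<in> A j} \<in> sets (stream_space (measure_pmf q))"
    by (cases "j < N") (auto simp: vimage_def Int_def conj_commute)
qed

lemma emeasure_stream_prefix:
  "emeasure (stream_space (measure_pmf q)) {\<omega>\<in>space (stream_space (measure_pmf q)). \<forall>j<N. \<omega> !! j \<in> A j}
     = (\<Prod>j<N. emeasure (measure_pmf q) (A j))"
proof (induction N arbitrary: A)
  case 0
  interpret prob_space "stream_space (measure_pmf q)"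
    by (rule prob_space.prob_space_stream_space[OF prob_space_measure_pmf])
  show ?case by (simp add: emeasure_space_1)
next
  case (Suc N)
  let ?S = "stream_space (measure_pmf q)"
  have shift: "{\<omega>\<in>space ?S. t ## \<omega> \<in> {\<omega>\<in>space ?S. \<forall>j<Suc N. \<omega> !! j \<in> A j}}
     = (if t \<in> A 0 then {\<omega>\<in>space ?S. \<forall>j<N. \<omega> !! j \<in> A (Suc j)} else {})" for t
    by (auto simp: space_stream_space less_Suc_eq_0_disj)
  have "emeasure ?S {\<omega>\<in>space ?S. \<forall>j<Suc N. \<omega> !! j \<in> A j}
      = (\<integral>\<^sup>+t. emeasure ?S {\<omega>\<in>space ?S. t ## \<omega> \<in> {\<omega>\<in>space ?S. \<forall>j<Suc N. \<omega> !! j \<in> A j}} \<partial>measure_pmf q)"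
    by (rule prob_space.emeasure_stream_space[OF prob_space_measure_pmf sets_stream_prefix[of q "Suc N" A]])
  also have "\<dots> = (\<integral>\<^sup>+t. emeasure ?S {\<omega>\<in>space ?S. \<forall>j<N. \<omega> !! j \<in> A (Suc j)} * indicator (A 0) t \<partial>measure_pmf q)"
    unfolding shift by (intro nn_integral_cong) (auto split: split_indicator)
  also have "\<dots> = emeasure ?S {\<omega>\<in>space ?S. \<forall>j<N. \<omega> !! j \<in> A (Suc j)} * emeasure (measure_pmf q) (A 0)"
    by (rule nn_integral_cmult_indicator) simp
  also have "\<dots> = (\<Prod>j<Suc N. emeasure (measure_pmf q) (A j))"
    unfolding prod.lessThan_Suc_shift Suc.IH[of "\<lambda>j. A (Suc j)"] by (simp add: mult.commute)
  finally show ?case .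
qed

lemma measure_stream_prefix:
  "measure (stream_space (measure_pmf q)) {\<omega>\<in>space (stream_space (measure_pmf q)). \<forall>j<N. \<omega> !! j \<in> A j}
     = (\<Prod>j<N. measure_pmf.prob q (A j))"
proof -
  have "emeasure (stream_space (measure_pmf q)) {\<omega>\<in>space (stream_space (measure_pmf q)). \<forall>j<N. \<omega> !! j \<in> A j}
      = ennreal (\<Prod>j<N. measure_pmf.prob q (A j))"
    unfolding emeasure_stream_prefix by (simp add: measure_pmf.emeasure_eq_measure prod_ennreal)
  then show ?thesis
    by (simp add: measure_def prod_nonneg)
qed

lemma measurable_PiM_map_components:
  assumes g: "g \<in> measurable M N"
  shows "(\<lambda>X i. g (X i)) \<in> measurable (PiM (UNIV :: 'i set) (\<lambda>_. M)) (PiM UNIV (\<lambda>_. N))"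
proof (rule measurable_PiM_single')
  fix i :: 'i
  show "(\<lambda>X. g (X i)) \<in> measurable (PiM UNIV (\<lambda>_. M)) N"
    by (rule measurable_compose[OF measurable_component_singleton[of i UNIV "\<lambda>_. M"] g]) simp
next
  show "(\<lambda>X i. g (X i)) \<in> space (PiM UNIV (\<lambda>_. M)) \<rightarrow> (\<Pi>\<^sub>E i\<in>UNIV. space N)"
    using measurable_space[OF g] by (auto simp: space_PiM)
qed

lemma distr_PiM_map_components:
  assumes M: "prob_space M" and g[measurable]: "g \<in> measurable M N"
  shows "distr (PiM UNIV (\<lambda>_::'i. M)) (PiM UNIV (\<lambda>_. N)) (\<lambda>X i. g (X i)) = PiM UNIV (\<lambda>_. distr M N g)"
    (is "?D = _")
proof -
  interpret M: prob_space M by (rule M)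
  interpret MD: prob_space "distr M N g" by (rule M.prob_space_distr[OF g])
  interpret PM: product_prob_space "\<lambda>_. M" "UNIV :: 'i set" ..
  interpret PD: product_prob_space "\<lambda>_. distr M N g" "UNIV :: 'i set" ..
  have sD: "sets (distr M N g) = sets N" by simp
  show ?thesis
  proof (rule PD.PiM_eq)
    show "sets ?D = sets (PiM UNIV (\<lambda>_. distr M N g))"
      by (simp add: sets_PiM_cong[OF refl sD])
  next
    fix J :: "'i set" and F assume J: "finite J" and F: "\<And>j. j \<in> J \<Longrightarrow> F j \<in> sets (distr M N g)"
    have "prod_emb UNIV (\<lambda>_. distr M N g) J (Pi\<^sub>E J F) \<in> sets (PiM UNIV (\<lambda>_. N))"
      unfolding sets_PiM_cong[OF refl sD, symmetric]
      by (rule measurable_prod_emb) (use J F in \<open>auto intro!: sets_PiM_I_finite\<close>)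
    then have "emeasure ?D (prod_emb UNIV (\<lambda>_. distr M N g) J (Pi\<^sub>E J F))
      = emeasure (PiM UNIV (\<lambda>_. M)) ((\<lambda>X i. g (X i)) -` prod_emb UNIV (\<lambda>_. distr M N g) J (Pi\<^sub>E J F)
          \<inter> space (PiM UNIV (\<lambda>_. M)))"
      by (intro emeasure_distr measurable_PiM_map_components g)
    also have "(\<lambda>X i. g (X i)) -` prod_emb UNIV (\<lambda>_. distr M N g) J (Pi\<^sub>E J F) \<inter> space (PiM UNIV (\<lambda>_. M))
       = prod_emb UNIV (\<lambda>_. M) J (Pi\<^sub>E J (\<lambda>j. g -` F j \<inter> space M))"
      using measurable_space[OF g] by (auto simp: prod_emb_def space_PiM PiE_iff)
    also have "emeasure (PiM UNIV (\<lambda>_. M)) \<dots> = (\<Prod>j\<in>J. emeasure M (g -` F j \<inter> space M))"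
      using J F M by (intro emeasure_PiM_emb) auto
    also have "\<dots> = (\<Prod>j\<in>J. emeasure (distr M N g) (F j))"
      using F by (intro prod.cong refl) (simp add: emeasure_distr)
    finally show "emeasure ?D (prod_emb UNIV (\<lambda>_. distr M N g) J (Pi\<^sub>E J F))
      = (\<Prod>j\<in>J. emeasure (distr M N g) (F j))" .
  qed
qed

lemma distr_smap_stream_space:
  assumes M: "prob_space M" and g[measurable]: "g \<in> measurable M N"
  shows "distr (stream_space M) (stream_space N) (smap g) = stream_space (distr M N g)"
proof -
  have "distr (stream_space M) (stream_space N) (smap g)
      = distr (PiM UNIV (\<lambda>_. M)) (stream_space N) (smap g \<circ> to_stream)"
    by (subst stream_space_eq_distr, rule distr_distr) measurable
  also have "smap g \<circ> to_stream = to_stream \<circ> (\<lambda>X i. g (X i))"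
    by (simp add: fun_eq_iff to_stream_def stream.map_comp comp_def)
  also have "distr (PiM UNIV (\<lambda>_. M)) (stream_space N) (to_stream \<circ> (\<lambda>X i. g (X i)))
      = distr (distr (PiM UNIV (\<lambda>_. M)) (PiM UNIV (\<lambda>_. N)) (\<lambda>X i. g (X i))) (stream_space N) to_stream"
    by (rule distr_distr[symmetric]) (measurable, rule measurable_PiM_map_components[OF g])
  also have "\<dots> = distr (PiM UNIV (\<lambda>_. distr M N g)) (stream_space (distr M N g)) to_stream"
    unfolding distr_PiM_map_components[OF M g] by (intro distr_cong refl sets_stream_space_cong) simp
  also have "\<dots> = stream_space (distr M N g)"
    by (rule stream_space_eq_distr[symmetric])
  finally show ?thesis .
qed

lemma measurable_map_upt:
  assumes F: "\<And>k. F k \<in> measurable M (count_space UNIV)"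
  shows "(\<lambda>\<omega>. map (\<lambda>k. F k \<omega>) [0..<d]) \<in> measurable M (count_space (UNIV :: nat list set))"
  unfolding measurable_count_space_eq2_countable
proof (intro conjI ballI)
  fix l :: "nat list"
  have "map (\<lambda>k. F k \<omega>) [0..<d] = l \<longleftrightarrow> length l = d \<and> (\<forall>k\<in>{..<d}. F k \<omega> = l ! k)" for \<omega>
    by (auto simp: list_eq_iff_nth_eq)
  then have "(\<lambda>\<omega>. map (\<lambda>k. F k \<omega>) [0..<d]) -` {l} \<inter> space M
      = {\<omega>\<in>space M. length l = d \<and> (\<forall>k\<in>{..<d}. F k \<omega> = l ! k)}"
    by blast
  moreover have "Measurable.pred M (\<lambda>\<omega>. \<forall>k\<in>{..<d}. F k \<omega> = l ! k)"
    by (rule pred_intros_finite(3)) (auto intro: pred_count_space_const1 F)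
  ultimately show "(\<lambda>\<omega>. map (\<lambda>k. F k \<omega>) [0..<d]) -` {l} \<inter> space M \<in> sets M"
    by (cases "length l = d") (auto simp: pred_def)
qed simp

lemma measurable_wsg_times:
  assumes "sets M = sets (count_space UNIV)"
  shows "wsg_times d \<in> measurable (stream_space M) (count_space UNIV)"
  unfolding measurable_cong_sets[OF sets_stream_space_cong[OF assms] refl] wsg_times_def
proof (rule measurable_map_upt)
  fix k :: nat
  have "Measurable.pred (stream_space (count_space UNIV)) (\<lambda>\<omega>. k \<in> \<omega> !! i)" for i
    using measurable_compose[OF measurable_snth[of i "count_space UNIV"], of "\<lambda>I. k \<in> I" "count_space UNIV"]
    by simp
  then have "(\<lambda>\<omega>. LEAST i. k \<in> \<omega> !! i) \<in> measurable (stream_space (count_space UNIV)) (count_space UNIV)"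
    by (rule measurable_Least)
  then show "(\<lambda>\<omega>. Suc (LEAST i. k \<in> \<omega> !! i)) \<in> measurable (stream_space (count_space UNIV)) (count_space UNIV)"
    by measurable
qed

definition wsg_pmf :: "nat \<Rightarrow> nat set pmf \<Rightarrow> nat list pmf" where
  "wsg_pmf d q = Abs_pmf (distr (stream_space (measure_pmf q)) (count_space UNIV) (wsg_times d))"

lemma measure_pmf_wsg_pmf:
  "measure_pmf (wsg_pmf d q) = distr (stream_space (measure_pmf q)) (count_space UNIV) (wsg_times d)"
  unfolding wsg_pmf_def
proof (rule Abs_pmf_inverse, intro CollectI conjI)
  let ?W = "distr (stream_space (measure_pmf q)) (count_space UNIV) (wsg_times d)"
  show "prob_space ?W"
    by (intro prob_space.prob_space_distr prob_space.prob_space_stream_space prob_space_measure_pmf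
        measurable_wsg_times) simp
  show "sets ?W = UNIV" by simp
  interpret prob_space ?W by fact
  show "AE y in ?W. measure ?W {y} \<noteq> 0"
    by (subst AE_support_countable) (auto intro!: exI[of _ UNIV])
qed

lemma is_law_on_wsg_pmf: "is_law_on d (wsg_pmf d q)"
proof -
  have "AE t in measure_pmf (wsg_pmf d q). t \<in> {t. length t = d \<and> (\<forall>i<d. 0 < t ! i)}"
    unfolding measure_pmf_wsg_pmf
    by (subst AE_distr_iff) (auto intro!: AE_I2 measurable_wsg_times simp: wsg_times_def)
  then show ?thesis unfolding is_law_on_def AE_measure_pmf_iff by blast
qed

lemma is_wsg_law_wsg_pmf:
  assumes "set_pmf q \<subseteq> Pow {0..<d}" "\<forall>k<d. measure_pmf.prob q {I. k \<notin> I} < 1"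
  shows "is_wsg_law d (wsg_pmf d q)"
  using assms unfolding is_wsg_law_def by (auto simp: measure_pmf_wsg_pmf)

lemma AE_stream_eventually_hit:
  assumes "measure_pmf.prob q {I. i \<notin> I} < 1"
  shows "AE \<omega> in stream_space (measure_pmf q). \<exists>j. i \<in> \<omega> !! j"
proof -
  let ?S = "stream_space (measure_pmf q)" and ?r = "measure_pmf.prob q {I. i \<notin> I}"
  interpret S: prob_space ?S
    by (rule prob_space.prob_space_stream_space[OF prob_space_measure_pmf])
  define never where "never = {\<omega>\<in>space ?S. \<forall>j. i \<notin> \<omega> !! j}"
  have never_sets: "never \<in> sets ?S"
    unfolding never_def
  proof (rule sets.sets_Collect_countable_All)
    fix j
    have "(\<lambda>\<omega>. \<omega> !! j) -` {I. i \<notin> I} \<inter> space ?S \<in> sets ?S"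
      by (rule measurable_sets[OF measurable_snth]) simp
    then show "{\<omega>\<in>space ?S. i \<notin> \<omega> !! j} \<in> sets ?S"
      by (simp add: vimage_def Int_def conj_commute)
  qed
  have "measure ?S never \<le> ?r ^ N" for N
  proof -
    have "measure ?S never \<le> measure ?S {\<omega>\<in>space ?S. \<forall>j<N. \<omega> !! j \<in> {I. i \<notin> I}}"
      by (rule S.finite_measure_mono[OF _ sets_stream_prefix]) (auto simp: never_def)
    also have "\<dots> = (\<Prod>j<N. ?r)"
      by (rule measure_stream_prefix)
    finally show ?thesis by simp
  qed
  moreover have "(\<lambda>N. ?r ^ N) \<longlonglongrightarrow> 0"
    using assms by (intro LIMSEQ_power_zero) simp
  ultimately have "measure ?S never = 0"
    using measure_nonneg[of ?S never] LIMSEQ_le_const[of "\<lambda>N. ?r ^ N" 0 "measure ?S never"]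
    by (meson antisym)
  then show ?thesis
    by (subst AE_iff_measurable[OF never_sets]) (auto simp: never_def S.emeasure_eq_measure)
qed

lemma less_Suc_Least_iff:
  fixes P :: "nat \<Rightarrow> bool"
  assumes "\<exists>j. P j"
  shows "a < Suc (LEAST j. P j) \<longleftrightarrow> (\<forall>j<a. \<not> P j)"
proof
  assume a: "a < Suc (LEAST j. P j)"
  show "\<forall>j<a. \<not> P j"
  proof (intro allI impI notI)
    fix j assume "j < a" "P j"
    then have "(LEAST j. P j) \<le> j" by (intro Least_le)
    with a \<open>j < a\<close> show False by simp
  qed
next
  assume "\<forall>j<a. \<not> P j"
  then show "a < Suc (LEAST j. P j)"
    using LeastI_ex[OF assms] not_less_eq by blast
qed

lemma wsg_times_exceed_iff:
  assumes hit: "\<forall>i<d. \<exists>j. i \<in> \<omega> !! j" and n: "length n = d" "\<forall>v\<in>set n. v \<le> N"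
  shows "(\<forall>i<d. n ! i < wsg_times d \<omega> ! i) \<longleftrightarrow> (\<forall>j<N. \<omega> !! j \<in> {I. \<forall>i<d. j < n ! i \<longrightarrow> i \<notin> I})"
proof -
  have "n ! i < wsg_times d \<omega> ! i \<longleftrightarrow> (\<forall>j<n ! i. i \<notin> \<omega> !! j)" if "i < d" for i
    using that hit by (simp add: wsg_times_def less_Suc_Least_iff)
  then have "(\<forall>i<d. n ! i < wsg_times d \<omega> ! i) \<longleftrightarrow> (\<forall>i<d. \<forall>j<n ! i. i \<notin> \<omega> !! j)"
    by simp
  also have "\<dots> \<longleftrightarrow> (\<forall>j<N. \<forall>i<d. j < n ! i \<longrightarrow> i \<notin> \<omega> !! j)"
    using n by (metis nth_mem order.strict_trans2)
  finally show ?thesis by simp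
qed

lemma survival_wsg_pmf:
  assumes q: "\<forall>i<d. measure_pmf.prob q {I. i \<notin> I} < 1"
    and n: "length n = d" "\<forall>v\<in>set n. v \<le> N"
  shows "survival_pmf (wsg_pmf d q) n = (\<Prod>j<N. measure_pmf.prob q {I. \<forall>i<d. j < n ! i \<longrightarrow> i \<notin> I})"
proof -
  let ?S = "stream_space (measure_pmf q)"
  define T where "T = {t :: nat list. \<forall>i<d. n ! i < t ! i}"
  define E where "E = {\<omega>\<in>space ?S. \<forall>j<N. \<omega> !! j \<in> {I. \<forall>i<d. j < n ! i \<longrightarrow> i \<notin> I}}"
  have "survival_pmf (wsg_pmf d q) n = measure (distr ?S (count_space UNIV) (wsg_times d)) T"
    by (simp add: survival_pmf_def measure_pmf_wsg_pmf T_def n)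
  also have "\<dots> = measure ?S (wsg_times d -` T \<inter> space ?S)"
    by (rule measure_distr[OF measurable_wsg_times]) simp_all
  also have "\<dots> = measure ?S E"
  proof (rule measure_eq_AE)
    have "AE \<omega> in ?S. \<forall>i\<in>{..<d}. \<exists>j. i \<in> \<omega> !! j"
      using q by (intro eventually_ball_finite ballI AE_stream_eventually_hit) auto
    then show "AE \<omega> in ?S. (\<omega> \<in> wsg_times d -` T \<inter> space ?S) = (\<omega> \<in> E)"
    proof eventually_elim
      case (elim \<omega>)
      then have "\<omega> \<in> wsg_times d -` T \<longleftrightarrow> (\<forall>j<N. \<omega> !! j \<in> {I. \<forall>i<d. j < n ! i \<longrightarrow> i \<notin> I})"
        using wsg_times_exceed_iff[OF _ n, of \<omega>] by (simp add: T_def)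
      then show ?case by (auto simp: E_def)
    qed
    show "wsg_times d -` T \<inter> space ?S \<in> sets ?S"
      by (rule measurable_sets[OF measurable_wsg_times]) simp_all
    show "E \<in> sets ?S"
      unfolding E_def by (rule sets_stream_prefix)
  qed
  also have "\<dots> = (\<Prod>j<N. measure_pmf.prob q {I. \<forall>i<d. j < n ! i \<longrightarrow> i \<notin> I})"
    unfolding E_def by (rule measure_stream_prefix)
  finally show ?thesis .
qed

lemma exchangeable_wsg_pmf:
  assumes q: "\<And>\<pi>. \<pi> permutes {0..<d} \<Longrightarrow> map_pmf (\<lambda>I. {k\<in>{0..<d}. \<pi> k \<in> I}) q = q"
  shows "exchangeable_law d (wsg_pmf d q)"
  unfolding exchangeable_law_def
proof (intro allI impI)
  fix \<pi> assume \<pi>: "\<pi> permutes {0..<d}"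
  define \<sigma> where "\<sigma> t = map (\<lambda>i. t ! \<pi> i) [0..<d]" for t :: "nat list"
  define h where "h I = {k\<in>{0..<d}. \<pi> k \<in> I}" for I
  have \<sigma>_wsg: "\<sigma> \<circ> wsg_times d = wsg_times d \<circ> smap h"
  proof
    fix \<omega> :: "nat set stream"
    have "\<pi> i < d" if "i < d" for i
      using permutes_in_image[OF \<pi>, of i] that by simp
    then show "(\<sigma> \<circ> wsg_times d) \<omega> = (wsg_times d \<circ> smap h) \<omega>"
      by (simp add: \<sigma>_def h_def wsg_times_def)
  qed
  have "measure_pmf (map_pmf \<sigma> (wsg_pmf d q))
      = distr (stream_space (measure_pmf q)) (count_space UNIV) (\<sigma> \<circ> wsg_times d)"
    unfolding map_pmf_rep_eq measure_pmf_wsg_pmf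
    by (rule distr_distr) (auto intro: measurable_wsg_times)
  also have "\<dots> = distr (distr (stream_space (measure_pmf q)) (stream_space (count_space UNIV)) (smap h))
      (count_space UNIV) (wsg_times d)"
    unfolding \<sigma>_wsg by (rule distr_distr[symmetric]) (auto intro: measurable_wsg_times measurable_smap)
  also have "distr (stream_space (measure_pmf q)) (stream_space (count_space UNIV)) (smap h)
      = stream_space (distr (measure_pmf q) (count_space UNIV) h)"
    by (rule distr_smap_stream_space) (auto simp: prob_space_measure_pmf)
  also have "distr (measure_pmf q) (count_space UNIV) h = measure_pmf q"
    using q[OF \<pi>] unfolding h_def by (metis map_pmf_rep_eq)
  finally show "map_pmf (\<lambda>t. map (\<lambda>i. t ! \<pi> i) [0..<d]) (wsg_pmf d q) = wsg_pmf d q"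
    unfolding \<sigma>_def[abs_def] measure_pmf_inject measure_pmf_wsg_pmf[symmetric] .
qed

section \<open>Infinite extendibility\<close>

(* Subsets of nat are encoded by their 0/1 indicator functions, because the projective limit
   theorem needs Polish coordinate spaces. *)
definition outcome_family :: "(nat \<Rightarrow> real) \<Rightarrow> nat set \<Rightarrow> (nat \<Rightarrow> real) measure" where
  "outcome_family x J =
     distr (measure_pmf (outcome_pmf x J)) (PiM J (\<lambda>_. borel)) (\<lambda>A. restrict (indicator A) J)"

lemma measurable_restrict_indicator:
  "(\<lambda>A. restrict (indicator A) J) \<in> measurable (measure_pmf p) (PiM J (\<lambda>_. borel :: real measure))"
  by (auto simp: space_PiM)

lemma polish_projective_outcome_family:
  assumes "completely_monotone x"
  shows "polish_projective UNIV (outcome_family x)"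
  unfolding polish_projective_def projective_family_def
proof (intro conjI allI impI)
  fix J H :: "nat set" assume JH: "J \<subseteq> H" "finite H" "H \<subseteq> UNIV"
  have "distr (outcome_family x H) (PiM J (\<lambda>_. borel)) (\<lambda>f. restrict f J)
     = distr (measure_pmf (outcome_pmf x H)) (PiM J (\<lambda>_. borel)) ((\<lambda>f. restrict f J) \<circ> (\<lambda>A. restrict (indicator A) H))"
    unfolding outcome_family_def
    by (rule distr_distr) (auto intro: measurable_restrict_subset[OF JH(1)] simp: space_PiM)
  also have "(\<lambda>f. restrict f J) \<circ> (\<lambda>A. restrict (indicator A) H) = (\<lambda>A. restrict (indicator A) J) \<circ> (\<lambda>A. A \<inter> J)"
    using JH by (auto simp: fun_eq_iff restrict_def indicator_def)
  also have "distr (measure_pmf (outcome_pmf x H)) (PiM J (\<lambda>_. borel)) \<dots>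
     = distr (distr (measure_pmf (outcome_pmf x H)) (count_space UNIV) (\<lambda>A. A \<inter> J)) (PiM J (\<lambda>_. borel))
         (\<lambda>A. restrict (indicator A) J)"
    by (rule distr_distr[symmetric]) (auto simp: space_PiM)
  also have "distr (measure_pmf (outcome_pmf x H)) (count_space UNIV) (\<lambda>A. A \<inter> J) = measure_pmf (outcome_pmf x J)"
    using outcome_pmf_restrict[OF assms JH(2,1)] by (simp add: map_pmf_rep_eq[symmetric])
  finally show "outcome_family x J = distr (outcome_family x H) (PiM J (\<lambda>_. borel)) (\<lambda>f. restrict f J)"
    unfolding outcome_family_def[of x J] by (rule sym)
next
  fix J :: "nat set"
  show "prob_space (outcome_family x J)"
    unfolding outcome_family_def by (rule measure_pmf.prob_space_distr[OF measurable_restrict_indicator])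
qed

definition outcome_limit :: "(nat \<Rightarrow> real) \<Rightarrow> (nat \<Rightarrow> real) measure" where
  "outcome_limit x = projective_family.lim UNIV (outcome_family x) (\<lambda>_. borel)"

lemma
  assumes "completely_monotone x"
  shows prob_space_outcome_limit: "prob_space (outcome_limit x)"
    and sets_outcome_limit: "sets (outcome_limit x) = sets (PiM UNIV (\<lambda>_. borel :: real measure))"
proof -
  interpret polish_projective UNIV "outcome_family x"
    by (rule polish_projective_outcome_family[OF assms])
  show "prob_space (outcome_limit x)"
    unfolding outcome_limit_def by (rule P.prob_space_axioms)
  show "sets (outcome_limit x) = sets (PiM UNIV (\<lambda>_. borel :: real measure))"
    unfolding outcome_limit_def by (rule sets_lim)
qed

definition ones_set :: "nat set \<Rightarrow> (nat \<Rightarrow> real) \<Rightarrow> nat set" where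
  "ones_set D f = {k\<in>D. f k = 1}"

lemma sets_ones_set_vimage:
  assumes "finite D"
  shows "{f \<in> space (PiM D (\<lambda>_. borel :: real measure)). ones_set D f \<in> S} \<in> sets (PiM D (\<lambda>_. borel))"
proof -
  have "{f \<in> space (PiM D (\<lambda>_. borel :: real measure)). ones_set D f \<in> S}
      = (\<Union>B\<in>S \<inter> Pow D. Pi\<^sub>E D (\<lambda>k. if k \<in> B then {1::real} else - {1}))"
  proof (intro equalityI subsetI)
    fix f assume "f \<in> {f \<in> space (PiM D (\<lambda>_. borel)). ones_set D f \<in> S}"
    then show "f \<in> (\<Union>B\<in>S \<inter> Pow D. Pi\<^sub>E D (\<lambda>k. if k \<in> B then {1::real} else - {1}))"
      by (auto simp: ones_set_def space_PiM PiE_iff intro!: bexI[of _ "ones_set D f"])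
  next
    fix f assume "f \<in> (\<Union>B\<in>S \<inter> Pow D. Pi\<^sub>E D (\<lambda>k. if k \<in> B then {1::real} else - {1}))"
    then obtain B where "B \<in> S" "B \<subseteq> D" "f \<in> Pi\<^sub>E D (\<lambda>k. if k \<in> B then {1::real} else - {1})"
      by auto
    moreover from this have "ones_set D f = B"
      by (auto simp: ones_set_def PiE_iff split: if_splits)
    ultimately show "f \<in> {f \<in> space (PiM D (\<lambda>_. borel)). ones_set D f \<in> S}"
      by (auto simp: space_PiM PiE_iff)
  qed
  also have "\<dots> \<in> sets (PiM D (\<lambda>_. borel))"
    using assms by (intro sets.finite_UN) (auto intro!: sets_PiM_I_finite)
  finally show ?thesis .
qed

lemma
  assumes cm: "completely_monotone x" and D: "finite D"
  shows measurable_ones_set: "ones_set D \<in> measurable (outcome_limit x) (count_space UNIV)"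
    and distr_ones_set_outcome_limit:
      "distr (outcome_limit x) (count_space UNIV) (ones_set D) = measure_pmf (outcome_pmf x D)"
proof -
  interpret polish_projective UNIV "outcome_family x"
    by (rule polish_projective_outcome_family[OF cm])
  define X where "X S = {f \<in> space (PiM D (\<lambda>_. borel :: real measure)). ones_set D f \<in> S}" for S
  have "ones_set D (restrict f D) = ones_set D f" for f :: "nat \<Rightarrow> real"
    by (auto simp: ones_set_def)
  then have vimage_eq: "ones_set D -` S \<inter> space (outcome_limit x) = prod_emb UNIV (\<lambda>_. borel) D (X S)" for S
    by (auto simp: X_def outcome_limit_def prod_emb_def space_PiM simp del: restrict_apply)
  have ones_set_indicator: "ones_set D (restrict (indicator A) D) = A \<inter> D" for A
    by (auto simp: ones_set_def indicator_def)
  have X_sets: "X S \<in> sets (PiM D (\<lambda>_. borel))" for S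
    unfolding X_def by (rule sets_ones_set_vimage[OF D])
  have "ones_set D -` S \<inter> space (outcome_limit x) \<in> sets (outcome_limit x)" for S
    unfolding vimage_eq sets_outcome_limit[OF cm]
    by (rule measurable_prod_emb) (use X_sets in auto)
  then show meas: "ones_set D \<in> measurable (outcome_limit x) (count_space UNIV)"
    by (intro measurableI) auto
  show "distr (outcome_limit x) (count_space UNIV) (ones_set D) = measure_pmf (outcome_pmf x D)"
  proof (rule measure_eqI)
    fix S
    have "emeasure (distr (outcome_limit x) (count_space UNIV) (ones_set D)) S
        = emeasure (outcome_limit x) (ones_set D -` S \<inter> space (outcome_limit x))"
      by (rule emeasure_distr[OF meas]) simp
    also have "\<dots> = emeasure (outcome_family x D) (X S)"
      unfolding vimage_eq by (unfold outcome_limit_def, rule emeasure_lim_emb) (use D X_sets in auto)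
    also have "\<dots> = emeasure (measure_pmf (outcome_pmf x D)) {A. A \<inter> D \<in> S}"
      unfolding outcome_family_def emeasure_distr[OF measurable_restrict_indicator X_sets]
      using ones_set_indicator by (intro arg_cong[where f="emeasure _"]) (auto simp: X_def space_PiM)
    also have "\<dots> = emeasure (measure_pmf (outcome_pmf x D)) S"
      using set_pmf_outcome_pmf[OF cm D]
      by (intro emeasure_eq_AE AE_pmfI) (auto simp: Int_absorb2)
    finally show "emeasure (distr (outcome_limit x) (count_space UNIV) (ones_set D)) S
        = emeasure (measure_pmf (outcome_pmf x D)) S" .
  qed simp
qed

definition hit_time :: "nat \<Rightarrow> (nat \<Rightarrow> real) stream \<Rightarrow> nat" where
  "hit_time k \<omega> = Suc (LEAST i. (\<omega> !! i) k = 1)"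

definition hit_times :: "(nat \<Rightarrow> real) stream \<Rightarrow> nat stream" where
  "hit_times \<omega> = smap (\<lambda>k. hit_time k \<omega>) nats"

definition extended_law :: "(nat \<Rightarrow> real) \<Rightarrow> nat stream measure" where
  "extended_law x = distr (stream_space (outcome_limit x)) (stream_space (count_space UNIV)) hit_times"

lemma measurable_hit_times:
  assumes cm: "completely_monotone x"
  shows "hit_times \<in> measurable (stream_space (outcome_limit x)) (stream_space (count_space UNIV))"
proof (rule measurable_stream_space2)
  fix k
  have "(\<lambda>f. f k) \<in> measurable (outcome_limit x) (borel :: real measure)"
    unfolding measurable_cong_sets[OF sets_outcome_limit[OF cm] refl]
    by (rule measurable_component_singleton) simp
  then have [measurable]: "(\<lambda>\<omega>. (\<omega> !! i) k) \<in> borel_measurable (stream_space (outcome_limit x))" for i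
    by (rule measurable_compose[OF measurable_snth])
  have "(\<lambda>\<omega>. LEAST i. (\<omega> !! i) k = (1::real)) \<in> measurable (stream_space (outcome_limit x)) (count_space UNIV)"
    by (rule measurable_Least) measurable
  then show "(\<lambda>\<omega>. hit_times \<omega> !! k) \<in> measurable (stream_space (outcome_limit x)) (count_space UNIV)"
    unfolding hit_times_def hit_time_def by simp
qed

lemma prob_space_extended_law: "completely_monotone x \<Longrightarrow> prob_space (extended_law x)"
  unfolding extended_law_def
  by (intro prob_space.prob_space_distr prob_space.prob_space_stream_space prob_space_outcome_limit
      measurable_hit_times)

lemma distr_stake_extended_law:
  assumes cm: "completely_monotone x"
  shows "distr (extended_law x) (count_space UNIV) (stake m) = measure_pmf (wsg_pmf m (outcome_pmf x {0..<m}))"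
proof -
  let ?D = "{0..<m}"
  have "stake m \<circ> hit_times = wsg_times m \<circ> smap (ones_set ?D)"
    by (auto simp: fun_eq_iff list_eq_iff_nth_eq hit_times_def hit_time_def wsg_times_def ones_set_def)
  then have "distr (extended_law x) (count_space UNIV) (stake m)
      = distr (stream_space (outcome_limit x)) (count_space UNIV) (wsg_times m \<circ> smap (ones_set ?D))"
    unfolding extended_law_def by (simp add: distr_distr[OF measurable_stake measurable_hit_times[OF cm]])
  also have "\<dots> = distr (distr (stream_space (outcome_limit x)) (stream_space (count_space UNIV)) (smap (ones_set ?D)))
      (count_space UNIV) (wsg_times m)"
    by (rule distr_distr[symmetric])
      (auto intro: measurable_wsg_times measurable_smap measurable_ones_set[OF cm])
  also have "distr (stream_space (outcome_limit x)) (stream_space (count_space UNIV)) (smap (ones_set ?D))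
      = stream_space (measure_pmf (outcome_pmf x ?D))"
    using distr_smap_stream_space[OF prob_space_outcome_limit[OF cm] measurable_ones_set[OF cm]]
    by (simp add: distr_ones_set_outcome_limit[OF cm])
  finally show ?thesis by (simp add: measure_pmf_wsg_pmf)
qed

section \<open>Sufficiency\<close>

lemma exchangeable_wsg_outcome_pmf:
  "completely_monotone x \<Longrightarrow> exchangeable_law d (wsg_pmf d (outcome_pmf x {0..<d}))"
  by (intro exchangeable_wsg_pmf outcome_pmf_permute) simp_all

lemma is_wsg_law_wsg_outcome_pmf:
  assumes cm: "completely_monotone x" and x1: "x 1 < 1"
  shows "is_wsg_law d (wsg_pmf d (outcome_pmf x {0..<d}))"
  using x1 by (intro is_wsg_law_wsg_pmf set_pmf_outcome_pmf[OF cm]) (simp_all add: prob_outcome_pmf_not_mem[OF cm])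

lemma infinitely_extendible_wsg_outcome_pmf:
  assumes cm: "completely_monotone x" and x1: "x 1 < 1"
  shows "infinitely_extendible d (wsg_pmf d (outcome_pmf x {0..<d}))"
  unfolding infinitely_extendible_def
  using prob_space_extended_law[OF cm] distr_stake_extended_law[OF cm]
    exchangeable_wsg_outcome_pmf[OF cm] is_wsg_law_wsg_outcome_pmf[OF cm x1]
  by (intro exI[of _ "extended_law x"]) (auto simp: extended_law_def)

lemma survival_wsg_outcome_pmf:
  assumes cm: "completely_monotone x" and x1: "x 1 < 1"
    and n: "length n = d" "\<forall>v\<in>set n. v \<le> N"
  shows "survival_pmf (wsg_pmf d (outcome_pmf x {0..<d})) n = (\<Prod>j<N. x (count_above n j))"
proof -
  have "measure_pmf.prob (outcome_pmf x {0..<d}) {I. \<forall>i<d. j < n ! i \<longrightarrow> i \<notin> I} = x (count_above n j)" for j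
  proof -
    have "{I. \<forall>i<d. j < n ! i \<longrightarrow> i \<notin> I} = {I. I \<inter> {i. i < d \<and> j < n ! i} = {}}" by auto
    moreover have "card {i. i < d \<and> j < n ! i} = count_above n j"
      by (simp add: count_above_def length_filter_conv_card n)
    moreover have "{i. i < d \<and> j < n ! i} \<subseteq> {0..<d}" by auto
    ultimately show ?thesis
      using prob_outcome_pmf_disjoint[OF cm, of "{0..<d}" "{i. i < d \<and> j < n ! i}"] by simp
  qed
  then show ?thesis
    using survival_wsg_pmf[OF _ n] x1 by (simp add: prob_outcome_pmf_not_mem[OF cm])
qed

lemma has_survival_Fbar_wsg_outcome_pmf:
  assumes "lead_one \<beta> \<in> M_infty"
  shows "has_survival d (wsg_pmf d (outcome_pmf (lead_one \<beta>) {0..<d})) (Fbar \<beta> d)"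
  unfolding has_survival_def
proof (intro conjI allI impI is_law_on_wsg_pmf)
  fix n :: "nat list" assume n: "length n = d"
  have "\<forall>v\<in>set n. v \<le> sum_list n" by (simp add: member_le_sum_list)
  then show "survival_pmf (wsg_pmf d (outcome_pmf (lead_one \<beta>) {0..<d})) n = Fbar \<beta> d n"
    using assms survival_wsg_outcome_pmf[OF _ _ n] Fbar_eq_prod_count_above[OF n]
    by (simp add: M_infty_iff)
qed

theorem corollary4p2:
  fixes \<beta> :: "nat \<Rightarrow> real"
  shows "((\<forall>d\<ge>2. is_discrete_survival d (Fbar \<beta> d)) \<longleftrightarrow>
            (\<lambda>k. if k = 0 then 1 else \<beta> k) \<in> M_infty)
       \<and> ((\<lambda>k. if k = 0 then 1 else \<beta> k) \<in> M_infty \<longrightarrow>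
            (\<forall>d\<ge>2. \<exists>p. has_survival d p (Fbar \<beta> d) \<and> exchangeable_law d p \<and>
                        is_wsg_law d p \<and> infinitely_extendible d p))"
proof -
  have "(\<lambda>k. if k = 0 then 1 else \<beta> k) = lead_one \<beta>" by (simp add: lead_one_def fun_eq_iff)
  moreover have "\<exists>p. has_survival d p (Fbar \<beta> d) \<and> exchangeable_law d p \<and> is_wsg_law d p \<and>
      infinitely_extendible d p" if "lead_one \<beta> \<in> M_infty" for d
    using that has_survival_Fbar_wsg_outcome_pmf[OF that] unfolding M_infty_iff
    by (intro exI[of _ "wsg_pmf d (outcome_pmf (lead_one \<beta>) {0..<d})"])
      (auto intro: exchangeable_wsg_outcome_pmf is_wsg_law_wsg_outcome_pmf
        infinitely_extendible_wsg_outcome_pmf)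
  ultimately show ?thesis
    using lead_one_in_M_infty[of \<beta>] by (auto simp: is_discrete_survival_def)
qed

end
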